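(* Let $m\in\mathbb{N}$ and let $\alpha_1,\dots,\alpha_n\in\mathbb{C}$ be $m$-th roots of unity. Let $q_1$ be the smallest prime factor of $m$, and let $k\in\mathbb{N}$ satisfy $q_1>\max\{n,k\}$. Then $\alpha_1^k+\alpha_2^k+\cdots+\alpha_n^k\neq 0$.
   Context: $\mathbb{N}$ denotes the set of positive integers. The $\alpha_i$ need not be distinct. *)

theory Defs
  imports Complex_Main "HOL-Computational_Algebra.Primes"
begin

end

theory Submission
  imports Defs "Berlekamp_Zassenhaus.Poly_Mod"
begin

(*
  Write alpha_i = z^(a_i) with z = exp(2 pi i / m) and put b_i = k a_i.  If sum_i z^(b_i) = 0,
  the integer polynomial h = sum_i x^(b_i) vanishes at z, hence at every z^j with j coprime
  to m: for a prime r not dividing m, the factor F = gcd h (x^m - 1) also vanishes at z^r,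
  since otherwise comparing the Frobenius congruence F(x)^r = F(x^r) (mod r) with the
  derivative of x^m - 1 would make r divide m.

  On the other hand, for fewer exponents than the smallest prime factor of m, some conjugate
  sum sum_i z^(j b_i) with j coprime to m is nonzero.  By induction on m = q n with q prime:
  some residue class of the b_i modulo q is empty, so Fourier inversion over the shifts
  j + s n (0 < s < q) forces every class sum to vanish if all conjugate sums do, and the
  induction hypothesis for n applied to a nonempty class gives a contradiction.
*)

section \<open>Integer polynomials vanishing at roots of unity\<close>

abbreviation ipoly :: "int poly \<Rightarrow> 'a :: comm_ring_1 \<Rightarrow> 'a" where
  "ipoly p \<equiv> poly (of_int_poly p)"

lemma ipoly_hom [simp]:
  fixes x :: "'a :: comm_ring_1"
  shows "ipoly (p + q) x = ipoly p x + ipoly q x"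
    and "ipoly (p - q) x = ipoly p x - ipoly q x"
    and "ipoly (- p) x = - ipoly p x"
    and "ipoly (p * q) x = ipoly p x * ipoly q x"
    and "ipoly (p ^ n) x = ipoly p x ^ n"
    and "ipoly (smult c p) x = of_int c * ipoly p x"
    and "ipoly (monom c n) x = of_int c * x ^ n"
    and "ipoly (p \<circ>\<^sub>p q) x = ipoly p (ipoly q x)"
    and "ipoly 1 x = 1"
    and "ipoly [:c:] x = of_int c"
  by (simp_all add: hom_distribs poly_monom poly_pcompose)

lemma ipoly_primitive_part_eq_0:
  fixes x :: "'a :: {idom, ring_char_0}"
  assumes "ipoly p x = 0"
  shows "ipoly (primitive_part p) x = 0"
proof (cases "p = 0")
  case False
  have "ipoly p x = of_int (content p) * ipoly (primitive_part p) x"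
    by (metis content_times_primitive_part ipoly_hom(6))
  with assms False show ?thesis by simp
qed simp

lemma ipoly_normalize_eq_0:
  fixes x :: "'a :: {idom, ring_char_0}"
  assumes "ipoly p x = 0"
  shows "ipoly (normalize p) x = 0"
proof (cases "p = 0")
  case False
  have "ipoly p x = of_int (sgn (lead_coeff p)) * ipoly (normalize p) x"
    by (metis unit_factor_mult_normalize unit_factor_poly_def unit_factor_int_def
        monom_0 ipoly_hom(4) ipoly_hom(7) power_0 mult_1_right)
  with assms False show ?thesis by (auto simp: sgn_if split: if_splits)
qed simp

lemma ipoly_gcd_eq_0:
  fixes x :: "'a :: {idom, ring_char_0}"
  assumes "ipoly p x = 0" and "ipoly q x = 0"
  shows "ipoly (gcd p q) x = 0"
proof -
  txt \<open>On \<open>int poly\<close> the gcd is computed by pseudo-remainders; a common root survives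
    each step.\<close>
  have "ipoly (gcd_poly_code_aux p q) x = 0" if "ipoly p x = 0" "ipoly q x = 0" for p q
    using that
  proof (induction p q rule: gcd_poly_code_aux.induct)
    case (1 p q)
    show ?case
    proof (cases "q = 0")
      case True
      with 1 show ?thesis by (subst gcd_poly_code_aux.simps) (simp add: ipoly_normalize_eq_0)
    next
      case False
      obtain a Q where "a \<noteq> 0" "smult a p = q * Q + pseudo_mod p q"
        using pseudo_mod(1)[OF False, of p] by blast
      then have "ipoly (pseudo_mod p q) x = 0"
        using 1(2,3) by (metis add.right_neutral add_0 ipoly_hom(1,4,6) mult_zero_left mult_zero_right)
      then have "ipoly (gcd_poly_code_aux q (primitive_part (pseudo_mod p q))) x = 0"
        using 1 False ipoly_primitive_part_eq_0 by blast
      with False show ?thesis by (subst gcd_poly_code_aux.simps) simp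
    qed
  qed
  with assms show ?thesis
    unfolding gcd_poly_code gcd_poly_code_def
    by (auto simp: ipoly_normalize_eq_0 ipoly_primitive_part_eq_0)
qed

lemma prime_dvd_power_add_minus:
  fixes x y :: "'a :: comm_ring_1"
  assumes "prime r"
  shows "of_nat r dvd (x + y) ^ r - x ^ r - y ^ r"
proof -
  have r: "r > 0" using assms prime_gt_0_nat by blast
  have "{..r} = insert 0 (insert r {1..<r})" using r by auto
  then have "(x + y) ^ r = y ^ r + x ^ r + (\<Sum>k\<in>{1..<r}. of_nat (r choose k) * x ^ k * y ^ (r - k))"
    using r by (simp add: binomial_ring add.assoc)
  moreover have "of_nat r dvd (of_nat (r choose k) :: 'a)" if "k \<in> {1..<r}" for k
  proof -
    have "r dvd (r choose k)" using that r assms by (intro dvd_choose_prime) auto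
    then show ?thesis by (metis dvdE dvd_triv_left of_nat_mult)
  qed
  then have "of_nat r dvd (\<Sum>k\<in>{1..<r}. of_nat (r choose k) * x ^ k * y ^ (r - k))"
    by (intro dvd_sum dvd_mult2) simp
  ultimately show ?thesis by (simp add: algebra_simps)
qed

lemma prime_dvd_power_minus_self:
  fixes a :: int
  assumes "prime r"
  shows "int r dvd a ^ r - a"
proof -
  have nat_case: "int r dvd int b ^ r - int b" for b :: nat
  proof (induction b)
    case 0
    then show ?case using assms prime_gt_0_nat by (simp add: zero_power)
  next
    case (Suc b)
    have "int (Suc b) ^ r - int (Suc b)
        = (int b ^ r - int b) + ((int b + 1) ^ r - int b ^ r - 1 ^ r)"
      by (simp add: add.commute)
    then show ?case
      using Suc.IH prime_dvd_power_add_minus[OF assms, of "int b" 1] by (metis dvd_add of_nat_id)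
  qed
  have "a mod int r = int (nat (a mod int r))"
    using assms prime_gt_0_nat by simp
  then have "int r dvd (a mod int r) ^ r - a mod int r"
    using nat_case by metis
  moreover have "((a mod int r) ^ r - a mod int r) mod int r = (a ^ r - a) mod int r"
    by (rule mod_diff_cong[OF power_mod mod_mod_trivial])
  ultimately show ?thesis
    by (simp add: dvd_eq_mod_eq_0)
qed

lemma int_poly_frobenius:
  assumes "prime r"
  shows "[:int r:] dvd F ^ r - F \<circ>\<^sub>p monom 1 r"
proof (induction F)
  case 0
  then show ?case using assms prime_gt_0_nat by (simp add: zero_power)
next
  case (pCons a G)
  let ?X = "monom (1 :: int) 1"
  have "pCons a G = [:a:] + ?X * G"
    by (simp add: monom_Suc monom_0 pCons_one)
  moreover have "pCons a G \<circ>\<^sub>p monom 1 r = [:a:] + monom 1 r * (G \<circ>\<^sub>p monom 1 r)"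
    by (simp add: pcompose_pCons)
  moreover have "(?X * G) ^ r = monom 1 r * G ^ r"
    by (simp add: power_mult_distrib monom_power)
  moreover have "[:a:] ^ r - [:a:] = [:a ^ r - a:]"
    by (simp add: poly_const_pow)
  ultimately have "pCons a G ^ r - pCons a G \<circ>\<^sub>p monom 1 r
      = (([:a:] + ?X * G) ^ r - [:a:] ^ r - (?X * G) ^ r) + [:a ^ r - a:]
        + monom 1 r * (G ^ r - G \<circ>\<^sub>p monom 1 r)"
    by (simp only:) (simp add: algebra_simps)
  moreover have "[:int r:] dvd ([:a:] + ?X * G) ^ r - [:a:] ^ r - (?X * G) ^ r"
    using prime_dvd_power_add_minus[OF assms] by (metis of_nat_poly of_int_of_nat_eq)
  moreover have "[:int r:] dvd [:a ^ r - a:]"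
    using prime_dvd_power_minus_self[OF assms] by (simp add: const_poly_dvd_const_poly_iff)
  ultimately show ?case
    using pCons.IH by (metis dvd_add dvd_mult)
qed

lemma monic_xm_minus_1:
  assumes "m > 0"
  shows "monic (monom 1 m - 1 :: int poly)" and "degree (monom 1 m - 1 :: int poly) = m"
proof -
  have "degree (1 :: int poly) < degree (monom (1 :: int) m)"
    using assms by (simp add: degree_monom_eq)
  then show "degree (monom 1 m - 1 :: int poly) = m"
    by (metis add_uminus_conv_diff degree_add_eq_left degree_minus degree_monom_eq one_neq_zero)
  then show "monic (monom 1 m - 1 :: int poly)"
    using assms by simp
qed

lemma ipoly_xm_minus_1: "ipoly (monom 1 m - 1) x = x ^ m - 1"
  by (simp add: hom_distribs poly_monom)

lemma pderiv_xm_minus_1: "pderiv (monom 1 m - 1 :: int poly) = monom (int m) (m - 1)"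
  by (simp add: pderiv_monom pderiv_diff)

lemma prime_dvd_coeff_0_if_monic_factor:
  fixes g u :: "int poly" and r :: int
  assumes "prime r" and "monic g" and "degree g > 0" and "g dvd u"
    and "\<forall>i>0. r dvd coeff u i"
  shows "r dvd coeff u 0"
proof (rule ccontr)
  assume not_dvd: "\<not> r dvd coeff u 0"
  interpret poly_mod r .
  have r1: "r > 1" using assms(1) prime_gt_1_int by blast
  have "Mp u = [:coeff u 0 mod r:]"
    by (rule poly_eqI) (use assms(5) in \<open>auto simp: Mp_coeff M_def coeff_pCons split: nat.split\<close>)
  then have "Mp (Mp u) \<noteq> 0" and "degree (Mp u) = 0"
    using not_dvd by (simp_all add: Mp_const_poly dvd_eq_mod_eq_0)
  moreover have "g dvdm Mp u"
    using assms(4) by (auto simp: dvdm_def elim!: dvdE)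
  ultimately have "degree g \<le> 0"
    using dvdm_imp_degree_le[OF _ assms(2) _ r1] by metis
  with assms(3) show False by simp
qed

lemma prime_dvd_coeff_0_if_root_of_unity:
  fixes z :: "'a :: {idom, ring_char_0}" and r :: int
  assumes "m > 0" and "z ^ m = 1" and "prime r" and "ipoly u z = 0"
    and "\<forall>i>0. r dvd coeff u i"
  shows "r dvd coeff u 0"
proof -
  define g where "g = gcd u (monom 1 m - 1)"
  have "ipoly (monom 1 m - 1) z = 0"
    using assms(2) by (simp only: ipoly_xm_minus_1 diff_self)
  then have "ipoly g z = 0"
    unfolding g_def by (intro ipoly_gcd_eq_0 assms(4))
  have "g dvd u"
    unfolding g_def by simp
  have "g dvd monom 1 m - 1"
    unfolding g_def by simp
  then obtain h where "monom 1 m - 1 = g * h"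
    by (rule dvdE)
  then have "lead_coeff g * lead_coeff h = 1"
    using monic_xm_minus_1(1)[OF assms(1)] by (simp add: lead_coeff_mult)
  then have "lead_coeff g = 1 \<or> lead_coeff g = -1"
    unfolding zmult_eq_1_iff by blast
  then obtain g' where "monic g'" and "g' dvd u" and "ipoly g' z = 0"
  proof
    assume "lead_coeff g = 1"
    with that \<open>g dvd u\<close> \<open>ipoly g z = 0\<close> show thesis by blast
  next
    assume "lead_coeff g = -1"
    then have "monic (- g)" by simp
    moreover have "- g dvd u" using \<open>g dvd u\<close> by simp
    moreover have "ipoly (- g) z = 0" using \<open>ipoly g z = 0\<close> by simp
    ultimately show thesis by (rule that)
  qed
  moreover have "degree g' > 0"
  proof (rule ccontr)
    assume "\<not> degree g' > 0"
    then have "g' = 1"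
      using \<open>monic g'\<close> by (metis degree_eq_zeroE gr0I one_pCons coeff_pCons_0)
    with \<open>ipoly g' z = 0\<close> show False by simp
  qed
  ultimately show ?thesis
    using prime_dvd_coeff_0_if_monic_factor[OF assms(3)] assms(5) by blast
qed

lemma ipoly_factor_xm_minus_1_root_pow_prime:
  fixes \<omega> :: "'a :: {idom, ring_char_0}"
  assumes "m > 0" and "\<omega> ^ m = 1" and "prime r" and "\<not> r dvd m"
    and factor: "F * K = monom 1 m - 1" and "ipoly F \<omega> = 0"
  shows "ipoly F (\<omega> ^ r) = 0"
proof (rule ccontr)
  define \<theta> where "\<theta> = \<omega> ^ r"
  assume "ipoly F (\<omega> ^ r) \<noteq> 0"
  then have F\<theta>: "ipoly F \<theta> \<noteq> 0" by (simp add: \<theta>_def)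
  have \<theta>_root: "\<theta> ^ m = 1"
    unfolding \<theta>_def using assms(2) by (metis power_mult mult.commute power_one)
  have "ipoly F \<theta> * ipoly K \<theta> = \<theta> ^ m - 1"
    by (simp only: factor ipoly_xm_minus_1 flip: ipoly_hom(4))
  with F\<theta> \<theta>_root have K\<theta>: "ipoly K \<theta> = 0"
    by simp
  txt \<open>Differentiating \<open>F K = x\<^sup>m - 1\<close> at the root \<open>\<theta>\<close> of \<open>K\<close>:\<close>
  have "pderiv (F * K) = F * pderiv K + K * pderiv F"
    by (rule pderiv_mult)
  then have "monom (int m) (m - 1) = F * pderiv K + K * pderiv F"
    by (simp only: factor pderiv_xm_minus_1)
  then have "ipoly (monom (int m) (m - 1)) \<theta> = ipoly (F * pderiv K + K * pderiv F) \<theta>"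
    by (rule arg_cong)
  with K\<theta> have deriv: "of_nat m * \<theta> ^ (m - 1) = ipoly F \<theta> * ipoly (pderiv K) \<theta>"
    by (simp only: ipoly_hom(1,4,7) mult_zero_left add_0_right of_int_of_nat_eq)
  txt \<open>Frobenius at the root \<open>\<omega>\<close> of \<open>F\<close>:\<close>
  obtain Q where "F ^ r - F \<circ>\<^sub>p monom 1 r = [:int r:] * Q"
    using int_poly_frobenius[OF assms(3)] by (rule dvdE)
  then have "ipoly (F ^ r - F \<circ>\<^sub>p monom 1 r) \<omega> = ipoly ([:int r:] * Q) \<omega>"
    by (rule arg_cong)
  then have "ipoly F \<omega> ^ r - ipoly F \<theta> = of_nat r * ipoly Q \<omega>"
    by (simp only: ipoly_hom(2,4,5,7,8,10) \<theta>_def of_int_1 mult_1 of_int_of_nat_eq)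
  then have "- ipoly F \<theta> = of_nat r * ipoly Q \<omega>"
    using assms(6) prime_gt_0_nat[OF assms(3)] by (simp add: zero_power)
  then have frob: "ipoly F \<theta> = - (of_nat r * ipoly Q \<omega>)"
    by (metis minus_minus)
  define W where "W = Q * pderiv K \<circ>\<^sub>p monom 1 r * monom 1 r"
  have "of_nat m = of_nat m * \<theta> ^ (m - 1) * \<theta>"
    using power_minus_mult[OF assms(1), of \<theta>] \<theta>_root by (simp add: mult.assoc)
  also have "\<dots> = - (of_nat r * ipoly W \<omega>)"
    unfolding deriv frob by (simp add: W_def \<theta>_def poly_monom)
  finally have root: "ipoly ([:int m:] + smult (int r) W) \<omega> = 0"
    by simp
  have "\<forall>i>0. int r dvd coeff ([:int m:] + smult (int r) W) i"
    by (auto simp: coeff_pCons split: nat.split)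
  with root have "int r dvd coeff ([:int m:] + smult (int r) W) 0"
    using assms(3) by (intro prime_dvd_coeff_0_if_root_of_unity[OF assms(1,2)]) simp_all
  then have "int r dvd int m"
    by (simp add: dvd_add_left_iff)
  with assms(4) show False by simp
qed

lemma ipoly_unity_root_pow_prime:
  fixes \<omega> :: "'a :: {idom, ring_char_0}"
  assumes "m > 0" and "\<omega> ^ m = 1" and "prime r" and "\<not> r dvd m" and "ipoly h \<omega> = 0"
  shows "ipoly h (\<omega> ^ r) = 0"
proof -
  define F where "F = gcd h (monom 1 m - 1)"
  have "ipoly (monom 1 m - 1) \<omega> = 0"
    using assms(2) by (simp only: ipoly_xm_minus_1 diff_self)
  then have F_root: "ipoly F \<omega> = 0"
    unfolding F_def by (intro ipoly_gcd_eq_0 assms(5))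
  obtain K where "monom 1 m - 1 = F * K"
    unfolding F_def by (rule dvdE[OF gcd_dvd2])
  from ipoly_factor_xm_minus_1_root_pow_prime[OF assms(1-4) this[symmetric] F_root]
  have "ipoly F (\<omega> ^ r) = 0" .
  moreover obtain H where "h = F * H"
    unfolding F_def by (rule dvdE[OF gcd_dvd1])
  ultimately show ?thesis by simp
qed

(* Berlekamp_Zassenhaus hides Rings.coprime behind its own (equivalent) constant; the qualified
   name keeps the library lemmas about coprime applicable. *)

lemma ipoly_unity_root_pow_coprime:
  fixes \<omega> :: "'a :: {idom, ring_char_0}"
  assumes "m > 0" and "\<omega> ^ m = 1" and "ipoly h \<omega> = 0" and "Rings.coprime j m" and "j > 0"
  shows "ipoly h (\<omega> ^ j) = 0"
  using assms(4,5)
proof (induction j rule: less_induct)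
  case (less j)
  show ?case
  proof (cases "j = 1")
    case True
    with assms(3) show ?thesis by simp
  next
    case False
    then obtain r j' where r: "prime r" and j: "j = r * j'"
      using prime_factor_nat by (metis dvdE)
    then have "j' > 0" and "j' < j"
      using less.prems(2) prime_gt_1_nat[OF r] by auto
    moreover have "Rings.coprime j' m"
      using less.prems(1) j by simp
    ultimately have "ipoly h (\<omega> ^ j') = 0"
      using less.IH by blast
    moreover have "(\<omega> ^ j') ^ m = 1"
      using assms(2) by (metis power_mult mult.commute power_one)
    moreover have "\<not> r dvd m"
    proof
      assume "r dvd m"
      with less.prems(1) j have "is_unit r"
        by (intro coprime_common_divisor[of j m]) simp_all
      with r show False
        using not_prime_unit by blast
    qed
    ultimately have "ipoly h ((\<omega> ^ j') ^ r) = 0"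
      using ipoly_unity_root_pow_prime[OF assms(1) _ r] by blast
    then show ?thesis
      by (simp add: j power_mult mult.commute)
  qed
qed

section \<open>Roots of unity and discrete Fourier inversion\<close>

definition unit_root :: "nat \<Rightarrow> complex" where
  "unit_root n = cis (2 * pi / real n)"

lemma unit_root_nonzero [simp]: "unit_root n \<noteq> 0"
  by (simp add: unit_root_def)

lemma unit_root_pow: "unit_root n ^ k = cis (2 * pi * real k / real n)"
  by (simp add: unit_root_def DeMoivre mult_ac)

lemma unit_root_pow_self: "n > 0 \<Longrightarrow> unit_root n ^ n = 1"
  by (simp add: unit_root_pow)

lemma unit_root_pow_mod: "n > 0 \<Longrightarrow> unit_root n ^ k = unit_root n ^ (k mod n)"
  by (metis (no_types) div_mult_mod_eq mult.commute mult_1 power_add power_mult power_one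
      unit_root_pow_self)

lemma unit_root_pow_eq_1_iff:
  assumes "n > 0"
  shows "unit_root n ^ k = 1 \<longleftrightarrow> n dvd k"
proof
  have inj: "inj_on (\<lambda>k. cis (2 * pi * real k / real n)) {..<n}"
    using bij_betw_roots_unity[OF assms] by (simp add: bij_betw_def)
  assume "unit_root n ^ k = 1"
  then have "cis (2 * pi * real (k mod n) / real n) = cis (2 * pi * real 0 / real n)"
    using unit_root_pow_mod[OF assms, of k] by (simp add: unit_root_pow)
  then have "k mod n = 0"
    using inj_onD[OF inj] assms by auto
  then show "n dvd k" by auto
next
  assume "n dvd k"
  then show "unit_root n ^ k = 1"
    using unit_root_pow_self[OF assms] by (auto simp: power_mult elim!: dvdE)
qed

lemma unit_root_mult_pow:
  assumes "q > 0"
  shows "unit_root (q * n) ^ q = unit_root n"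
proof -
  have "2 * pi * real q / real (q * n) = 2 * pi / real n"
    using assms by (simp add: field_simps)
  then show ?thesis
    by (simp only: unit_root_pow) (simp only: unit_root_def)
qed

lemma root_of_unity_eq_unit_root_pow:
  assumes "n > 0" and "z ^ n = 1"
  shows "\<exists>a. z = unit_root n ^ a"
proof -
  have "z \<in> (\<lambda>k. cis (2 * pi * real k / real n)) ` {..<n}"
    using bij_betw_roots_unity[OF assms(1)] assms(2) by (simp add: bij_betw_def)
  then show ?thesis by (auto simp: unit_root_pow)
qed

lemma sum_unit_root_pow:
  assumes "q > 0"
  shows "(\<Sum>s<q. unit_root q ^ (s * d)) = (if q dvd d then of_nat q else 0)"
proof (cases "q dvd d")
  case True
  then have "unit_root q ^ (s * d) = 1" for s
    using unit_root_pow_eq_1_iff[OF assms] by simp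
  with True show ?thesis by simp
next
  case False
  define x where "x = unit_root q ^ d"
  have "x \<noteq> 1" and "x ^ q = 1"
    using False unit_root_pow_eq_1_iff[OF assms] by (auto simp: x_def simp flip: power_mult)
  then have "(\<Sum>s<q. x ^ s) = 0"
    by (simp add: geometric_sum)
  moreover have "unit_root q ^ (s * d) = x ^ s" for s
    by (simp add: x_def mult.commute power_mult)
  ultimately show ?thesis
    using False by simp
qed

(* The exponent q - t stands for -t modulo q. *)

lemma dft_inversion:
  assumes "q > 0" and "t < q"
  shows "(\<Sum>s<q. unit_root q ^ (s * (q - t)) * (\<Sum>t'<q. unit_root q ^ (s * t') * y t'))
    = of_nat q * y t"
proof -
  have orth: "q dvd q - t + t' \<longleftrightarrow> t' = t" if "t' < q" for t'
  proof
    assume "q dvd q - t + t'"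
    moreover have "0 < q - t + t'" and "q - t + t' < 2 * q"
      using assms that by auto
    ultimately have "q - t + t' = q"
      by (auto elim!: dvdE simp: less_2_cases_iff)
    then show "t' = t" using assms by simp
  qed (use assms in simp)
  have "(\<Sum>s<q. unit_root q ^ (s * (q - t)) * (\<Sum>t'<q. unit_root q ^ (s * t') * y t'))
      = (\<Sum>t'<q. y t' * (\<Sum>s<q. unit_root q ^ (s * (q - t + t'))))"
    unfolding sum_distrib_left
    by (subst sum.swap) (simp add: add_mult_distrib2 power_add mult_ac)
  also have "\<dots> = (\<Sum>t'<q. if t' = t then of_nat q * y t else 0)"
    using orth by (intro sum.cong refl) (simp add: sum_unit_root_pow[OF assms(1)])
  also have "\<dots> = of_nat q * y t"
    using assms(2) by simp
  finally show ?thesis .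
qed

lemma dft_vanishing:
  assumes "q > 0"
    and "\<forall>s. 0 < s \<and> s < q \<longrightarrow> (\<Sum>t<q. unit_root q ^ (s * t) * y t) = 0"
    and "t0 < q" and "y t0 = 0" and "t < q"
  shows "y t = 0"
proof -
  have "of_nat q * y t = (\<Sum>t'<q. y t')" if "t < q" for t
  proof -
    have "of_nat q * y t
        = (\<Sum>s<q. unit_root q ^ (s * (q - t)) * (\<Sum>t'<q. unit_root q ^ (s * t') * y t'))"
      using dft_inversion[OF assms(1) that] by simp
    also have "\<dots> = (\<Sum>s\<in>{0}. unit_root q ^ (s * (q - t)) * (\<Sum>t'<q. unit_root q ^ (s * t') * y t'))"
      using assms(1,2) by (intro sum.mono_neutral_right) auto
    finally show ?thesis by simp
  qed
  from this[OF assms(5)] this[OF assms(3)] assms(1,4) show ?thesis by simp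
qed

section \<open>Power sums of roots of unity\<close>

definition root_power_sum :: "nat \<Rightarrow> nat \<Rightarrow> nat list \<Rightarrow> complex" where
  "root_power_sum m j bs = (\<Sum>b\<leftarrow>bs. unit_root m ^ (j * b))"

lemma sum_list_residue_classes:
  fixes f :: "nat \<Rightarrow> 'a :: comm_monoid_add"
  assumes "q > 0"
  shows "(\<Sum>b\<leftarrow>bs. f b) = (\<Sum>t<q. \<Sum>b\<leftarrow>filter (\<lambda>b. b mod q = t) bs. f b)"
proof (induction bs)
  case (Cons b bs)
  have "(\<Sum>t<q. \<Sum>b'\<leftarrow>filter (\<lambda>b'. b' mod q = t) (b # bs). f b')
      = (\<Sum>t<q. (if b mod q = t then f b else 0) + (\<Sum>b'\<leftarrow>filter (\<lambda>b'. b' mod q = t) bs. f b'))"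
    by (intro sum.cong) auto
  also have "\<dots> = f b + (\<Sum>t<q. \<Sum>b'\<leftarrow>filter (\<lambda>b'. b' mod q = t) bs. f b')"
    using assms by (simp add: sum.distrib sum.delta')
  finally show ?case
    using Cons by simp
qed simp

lemma root_power_sum_shift:
  assumes "q > 0" and "n > 0"
  shows "root_power_sum (q * n) (j + s * n) bs
    = (\<Sum>t<q. unit_root q ^ (s * t) * root_power_sum (q * n) j (filter (\<lambda>b. b mod q = t) bs))"
proof -
  have "unit_root (q * n) ^ ((j + s * n) * b) = unit_root (q * n) ^ (j * b) * unit_root q ^ (s * (b mod q))"
    for b
  proof -
    have "unit_root (q * n) ^ ((j + s * n) * b) = unit_root (q * n) ^ (j * b) * (unit_root (q * n) ^ n) ^ (s * b)"
      by (simp add: algebra_simps power_add flip: power_mult)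
    also have "unit_root (q * n) ^ n = unit_root q"
      using unit_root_mult_pow[OF assms(2), of q] by (simp add: mult.commute)
    finally show ?thesis
      using unit_root_pow_mod[OF assms(1)] by (metis mod_mult_right_eq)
  qed
  then have "root_power_sum (q * n) (j + s * n) bs
      = (\<Sum>b\<leftarrow>bs. unit_root (q * n) ^ (j * b) * unit_root q ^ (s * (b mod q)))"
    by (simp add: root_power_sum_def)
  also have "\<dots> = (\<Sum>t<q. \<Sum>b\<leftarrow>filter (\<lambda>b. b mod q = t) bs. unit_root (q * n) ^ (j * b) * unit_root q ^ (s * (b mod q)))"
    by (rule sum_list_residue_classes[OF assms(1)])
  also have "\<dots> = (\<Sum>t<q. unit_root q ^ (s * t) * root_power_sum (q * n) j (filter (\<lambda>b. b mod q = t) bs))"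
    unfolding root_power_sum_def sum_list_const_mult[symmetric]
    by (intro sum.cong refl arg_cong[where f = sum_list] map_cong) (auto simp: mult.commute)
  finally show ?thesis .
qed

lemma root_power_sum_residue_class:
  assumes "q > 0" and "\<forall>b\<in>set bs. b mod q = t"
  shows "root_power_sum (q * n) j bs
    = unit_root (q * n) ^ (j * t) * root_power_sum n j (map (\<lambda>b. b div q) bs)"
proof -
  have "unit_root (q * n) ^ (j * b) = unit_root (q * n) ^ (j * t) * unit_root n ^ (j * (b div q))"
    if "b mod q = t" for b
  proof -
    have "j * b = j * (q * (b div q) + t)"
      using div_mult_mod_eq[of b q] that by (simp add: mult.commute)
    also have "\<dots> = j * t + q * (j * (b div q))"
      by (simp add: algebra_simps)
    finally show ?thesis
      using unit_root_mult_pow[OF assms(1), of n] by (simp add: power_add power_mult)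
  qed
  then have "root_power_sum (q * n) j bs
      = (\<Sum>b\<leftarrow>bs. unit_root (q * n) ^ (j * t) * unit_root n ^ (j * (b div q)))"
    unfolding root_power_sum_def using assms(2)
    by (intro arg_cong[where f = sum_list] map_cong) auto
  also have "\<dots> = unit_root (q * n) ^ (j * t) * root_power_sum n j (map (\<lambda>b. b div q) bs)"
    by (simp add: root_power_sum_def sum_list_const_mult o_def)
  finally show ?thesis .
qed

lemma root_power_sum_mult:
  assumes "q > 0"
  shows "root_power_sum (q * n) (q * j) bs = root_power_sum n j bs"
  using unit_root_mult_pow[OF assms, of n]
  by (simp add: root_power_sum_def power_mult mult.assoc)

lemma residue_class_sums_vanish:
  assumes "q > 0" and "n > 0"
    and "\<forall>s. 0 < s \<and> s < q \<longrightarrow> root_power_sum (q * n) (j + s * n) bs = 0"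
    and "t0 < q" and "\<forall>b\<in>set bs. b mod q \<noteq> t0" and "t < q"
  shows "root_power_sum (q * n) j (filter (\<lambda>b. b mod q = t) bs) = 0"
proof (rule dft_vanishing[OF assms(1) _ assms(4) _ assms(6)])
  show "\<forall>s. 0 < s \<and> s < q \<longrightarrow>
      (\<Sum>t<q. unit_root q ^ (s * t) * root_power_sum (q * n) j (filter (\<lambda>b. b mod q = t) bs)) = 0"
    using assms(3) root_power_sum_shift[OF assms(1,2)] by simp
  have "filter (\<lambda>b. b mod q = t0) bs = []"
    using assms(5) by (simp add: filter_empty_conv)
  then show "root_power_sum (q * n) j (filter (\<lambda>b. b mod q = t0) bs) = 0"
    by (simp add: root_power_sum_def)
qed

lemma exists_empty_residue_class:
  assumes "length bs < q"
  shows "\<exists>t<q. \<forall>b\<in>set bs. b mod q \<noteq> t"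
proof -
  have "card ((\<lambda>b. b mod q) ` set bs) < card {..<q}"
    using card_image_le[OF finite_set, of "\<lambda>b. b mod q" bs] card_length[of bs] assms by simp
  then have "\<not> {..<q} \<subseteq> (\<lambda>b. b mod q) ` set bs"
    using card_mono[OF finite_imageI[OF finite_set]] by (metis leD)
  then show ?thesis by auto
qed

lemma coprime_add_mult_self_iff:
  fixes a n s :: nat
  shows "Rings.coprime (a + s * n) n \<longleftrightarrow> Rings.coprime a n"
proof -
  have "gcd (a + s * n) n = gcd a n"
    by (metis gcd_add_mult add.commute gcd.commute)
  then show ?thesis
    by (simp only: coprime_iff_gcd_eq_1)
qed

lemma coprime_add_mult_if_dvd:
  fixes j n q :: nat
  assumes "q dvd n" and "Rings.coprime j n"
  shows "Rings.coprime (j + s * n) (q * n)"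
proof -
  have "Rings.coprime (j + s * n) n"
    using assms(2) coprime_add_mult_self_iff by blast
  moreover from this have "Rings.coprime (j + s * n) q"
    using coprime_divisors[OF dvd_refl assms(1)] by simp
  ultimately show ?thesis by simp
qed

lemma coprime_mult_add_mult:
  fixes j n q :: nat
  assumes "prime q" and "\<not> q dvd n" and "Rings.coprime j n" and "0 < s" and "s < q"
  shows "Rings.coprime (q * j + s * n) (q * n)"
proof -
  have "\<not> q dvd s"
    using assms(4,5) by (meson dvd_imp_le not_le)
  with assms(1,2) have "\<not> q dvd s * n"
    by (simp add: prime_dvd_mult_iff)
  then have "\<not> q dvd q * j + s * n"
    by (simp add: dvd_add_right_iff)
  then have "Rings.coprime (q * j + s * n) q"
    using prime_imp_coprime[OF assms(1)] Rings.coprime_commute by blast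
  moreover have "Rings.coprime (q * j) n"
    using assms(2,3) prime_imp_coprime[OF assms(1)] by simp
  then have "Rings.coprime (q * j + s * n) n"
    using coprime_add_mult_self_iff by blast
  ultimately show ?thesis by simp
qed

lemma root_power_sum_unit_root_1: "root_power_sum 1 j bs = of_nat (length bs)"
  by (induction bs) (simp_all add: root_power_sum_def unit_root_def)

lemma exists_coprime_root_power_sum_nonzero:
  assumes "m > 0" and "bs \<noteq> []" and "\<forall>q. prime q \<longrightarrow> q dvd m \<longrightarrow> length bs < q"
  shows "\<exists>j>0. Rings.coprime j m \<and> root_power_sum m j bs \<noteq> 0"
  using assms
proof (induction m arbitrary: bs rule: less_induct)
  case (less m)
  show ?case
  proof (cases "m = 1")
    case True
    have "root_power_sum 1 1 bs \<noteq> 0"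
      unfolding root_power_sum_unit_root_1 using less.prems(2) by simp
    with True show ?thesis
      by (intro exI[of _ 1]) simp
  next
    case False
    then obtain q n where q: "prime q" and m: "m = q * n"
      using prime_factor_nat[of m] by (metis dvdE)
    then have "q > 0" and "n > 0" and "n < m"
      using less.prems(1) prime_gt_1_nat[OF q] by auto
    have small: "\<forall>p. prime p \<longrightarrow> p dvd n \<longrightarrow> length xs < p" if "length xs \<le> length bs" for xs
    proof (intro allI impI)
      fix p assume "prime p" and "p dvd n"
      then have "length bs < p"
        using less.prems(3) m by simp
      with that show "length xs < p" by simp
    qed
    have "length bs < q"
      using less.prems(3) q m by simp
    then obtain t0 where "t0 < q" and t0: "\<forall>b\<in>set bs. b mod q \<noteq> t0"
      using exists_empty_residue_class by blast
    define t where "t = hd bs mod q"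
    define cls where "cls = filter (\<lambda>b. b mod q = t) bs"
    have "hd bs \<in> set cls"
      using less.prems(2) by (simp add: cls_def t_def)
    then have "cls \<noteq> []" by auto
    have cls_small: "length cls \<le> length bs" and cls_class: "\<forall>b\<in>set cls. b mod q = t"
      by (simp_all add: cls_def)
    show ?thesis
    proof (rule ccontr)
      assume no_j: "\<not> ?thesis"
      have vanish: "root_power_sum m j cls = 0"
        if "\<forall>s. 0 < s \<and> s < q \<longrightarrow> Rings.coprime (j + s * n) m" for j
      proof -
        have "\<forall>s. 0 < s \<and> s < q \<longrightarrow> root_power_sum (q * n) (j + s * n) bs = 0"
          using that no_j \<open>n > 0\<close> m by auto
        moreover have "t < q"
          using \<open>q > 0\<close> by (simp add: t_def)
        ultimately show ?thesis
          unfolding cls_def m using residue_class_sums_vanish[OF \<open>q > 0\<close> \<open>n > 0\<close> _ \<open>t0 < q\<close> t0]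
          by blast
      qed
      show False
      proof (cases "q dvd n")
        case True
        obtain j where "j > 0" and "Rings.coprime j n"
          and nonzero: "root_power_sum n j (map (\<lambda>b. b div q) cls) \<noteq> 0"
          using less.IH[OF \<open>n < m\<close> \<open>n > 0\<close>, of "map (\<lambda>b. b div q) cls"] \<open>cls \<noteq> []\<close>
            small[of "map (\<lambda>b. b div q) cls"] cls_small by auto
        have "root_power_sum m j cls = 0"
          using coprime_add_mult_if_dvd[OF True \<open>Rings.coprime j n\<close>] m by (intro vanish) simp
        with nonzero show False
          using root_power_sum_residue_class[OF \<open>q > 0\<close> cls_class] m by simp
      next
        case False
        obtain j where "j > 0" and "Rings.coprime j n" and nonzero: "root_power_sum n j cls \<noteq> 0"
          using less.IH[OF \<open>n < m\<close> \<open>n > 0\<close> \<open>cls \<noteq> []\<close> small[OF cls_small]] by blast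
        have "root_power_sum m (q * j) cls = 0"
          using coprime_mult_add_mult[OF q False \<open>Rings.coprime j n\<close>] m by (intro vanish) simp
        with nonzero show False
          using root_power_sum_mult[OF \<open>q > 0\<close>] m by simp
      qed
    qed
  qed
qed

lemma ipoly_sum_list: "ipoly (\<Sum>b\<leftarrow>bs. f b) x = (\<Sum>b\<leftarrow>bs. ipoly (f b) x)"
  by (induction bs) simp_all

lemma ipoly_sum_monom_unit_root_pow:
  "ipoly (\<Sum>b\<leftarrow>bs. monom 1 b) (unit_root m ^ j) = root_power_sum m j bs"
  by (simp add: ipoly_sum_list root_power_sum_def power_mult poly_monom)

lemma root_power_sum_conjugate_eq_0:
  assumes "m > 0" and "root_power_sum m 1 bs = 0" and "Rings.coprime j m" and "j > 0"
  shows "root_power_sum m j bs = 0"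
proof -
  have "ipoly (\<Sum>b\<leftarrow>bs. monom 1 b) (unit_root m) = 0"
    using assms(2) ipoly_sum_monom_unit_root_pow[of bs m 1] by simp
  from ipoly_unity_root_pow_coprime[OF assms(1) unit_root_pow_self[OF assms(1)] this assms(3,4)]
  show ?thesis
    by (simp add: ipoly_sum_monom_unit_root_pow)
qed

lemma sum_pow_roots_of_unity_eq_root_power_sum:
  fixes \<alpha> :: "nat \<Rightarrow> complex"
  assumes "m > 0" and "\<forall>i\<in>{1..n}. \<alpha> i ^ m = 1"
  obtains bs where "length bs = n" and "(\<Sum>i=1..n. \<alpha> i ^ k) = root_power_sum m 1 bs"
proof -
  have "\<forall>i\<in>{1..n}. \<exists>c. \<alpha> i = unit_root m ^ c"
    using root_of_unity_eq_unit_root_pow[OF assms(1)] assms(2) by blast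
  then obtain a where a: "\<forall>i\<in>{1..n}. \<alpha> i = unit_root m ^ a i"
    by (rule bchoice[THEN exE])
  define bs where "bs = map (\<lambda>i. k * a i) [1..<n+1]"
  have "root_power_sum m 1 bs = (\<Sum>i=1..n. unit_root m ^ (k * a i))"
    unfolding root_power_sum_def bs_def map_map o_def interv_sum_list_conv_sum_set_nat set_upt
    by (simp add: atLeastLessThanSuc_atLeastAtMost)
  also have "\<dots> = (\<Sum>i=1..n. \<alpha> i ^ k)"
    using a by (intro sum.cong refl) (simp add: mult.commute flip: power_mult)
  finally show thesis
    by (intro that[of bs]) (simp_all add: bs_def)
qed

theorem lemma2p3:
  fixes m n k :: nat and \<alpha> :: "nat \<Rightarrow> complex"
  assumes "m > 0" and "n > 0" and "k > 0"
    and "\<forall>i\<in>{1..n}. \<alpha> i ^ m = 1"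
    and "Min (prime_factors m) > max n k"
  shows "(\<Sum>i=1..n. \<alpha> i ^ k) \<noteq> 0"
proof -
  obtain bs where "length bs = n" and sum_eq: "(\<Sum>i=1..n. \<alpha> i ^ k) = root_power_sum m 1 bs"
    using sum_pow_roots_of_unity_eq_root_power_sum[OF assms(1,4)] by blast
  have "\<forall>q. prime q \<longrightarrow> q dvd m \<longrightarrow> length bs < q"
  proof (intro allI impI)
    fix q assume "prime q" and "q dvd m"
    then have "Min (prime_factors m) \<le> q"
      using assms(1) by (simp add: in_prime_factors_iff)
    with assms(5) \<open>length bs = n\<close> show "length bs < q" by simp
  qed
  moreover have "bs \<noteq> []"
    using assms(2) \<open>length bs = n\<close> by auto
  ultimately obtain j where "j > 0" and "Rings.coprime j m" and "root_power_sum m j bs \<noteq> 0"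
    using exists_coprime_root_power_sum_nonzero[OF assms(1)] by blast
  with sum_eq show ?thesis
    using root_power_sum_conjugate_eq_0[OF assms(1)] by metis
qed

end
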